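(* Let $h\in\mathcal{L}[t]$ be such that its Newton polygon $N_h$ has at least two edges, and let $P=(d,e)$ be the first break point of $N_h$ (the break point with least $x$-coordinate). Then: (1) there are $f,g\in\mathcal{L}[t]$ with $\deg_t(f)=d$, $N_f$ consisting of exactly the first edge of $N_h$, and $h=f\cdot g$; (2) there are $f,g\in\mathcal{L}[t]$ with $\deg_t(f)=d$, $N_f$ consisting of exactly the first edge of $N_h$, and $h=g\cdot f$.
   Context: $(\mathcal{L},v)$ is a complete discretely valued skew field (division ring with $v:\mathcal{L}\to\mathbb{Z}\cup\{\infty\}$, $v(x)=\infty\iff x=0$, $v(x+y)\ge\min\{v(x),v(y)\}$, $v(xy)=v(x)+v(y)$, such that every series $\sum x_i$ with $v(x_i)\to\infty$ converges). $\mathcal{L}[t]$ is the polynomial ring in a central indeterminate $t$. The Newton polygon $N_f$ of $f=\sum a_it^i$ is the lower convex hull of the points $(i,v(a_i))$ with $a_i\ne0$; a break point is a vertex where two edges meet; an edge from $(i,w_i)$ to $(j,w_j)$ has length $|j-i|$ and slope $(w_j-w_i)/(j-i)$. *)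

theory Defs
  imports "HOL-Analysis.Analysis" "HOL-Library.Extended_Real"
begin

definition discrete_valuation :: "('a::division_ring \<Rightarrow> ereal) \<Rightarrow> bool" where
  "discrete_valuation v \<longleftrightarrow>
     (\<forall>x. v x = \<infinity> \<longleftrightarrow> x = 0) \<and>
     (\<forall>x. x \<noteq> 0 \<longrightarrow> (\<exists>n::int. v x = ereal (of_int n))) \<and>
     (\<forall>x y. v (x + y) \<ge> min (v x) (v y)) \<and>
     (\<forall>x y. v (x * y) = v x + v y)"

definition complete_valuation :: "('a::division_ring \<Rightarrow> ereal) \<Rightarrow> bool" where
  "complete_valuation v \<longleftrightarrow>
     (\<forall>x :: nat \<Rightarrow> 'a. ((\<lambda>i. v (x i)) \<longlonglongrightarrow> \<infinity>) \<longrightarrow>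
        (\<exists>s. (\<lambda>n. v (s - (\<Sum>i<n. x i))) \<longlonglongrightarrow> \<infinity>))"

text \<open>Polynomials in a central indeterminate t over a (possibly noncommutative) ring,
  represented by their coefficient sequences with finite support.\<close>
definition is_poly :: "(nat \<Rightarrow> 'a::zero) \<Rightarrow> bool" where
  "is_poly f \<longleftrightarrow> finite {i. f i \<noteq> 0}"

definition pmul :: "(nat \<Rightarrow> 'a::semiring_0) \<Rightarrow> (nat \<Rightarrow> 'a) \<Rightarrow> nat \<Rightarrow> 'a" where
  "pmul f g = (\<lambda>n. \<Sum>i\<le>n. f i * g (n - i))"

definition pdeg :: "(nat \<Rightarrow> 'a::zero) \<Rightarrow> nat" where
  "pdeg f = (if {i. f i \<noteq> 0} = {} then 0 else Max {i. f i \<noteq> 0})"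

text \<open>Newton polygon: lower boundary of the convex hull of the points (i, v(a_i)), a_i \<noteq> 0.\<close>
definition np_points :: "('a::zero \<Rightarrow> ereal) \<Rightarrow> (nat \<Rightarrow> 'a) \<Rightarrow> (real \<times> real) set" where
  "np_points v f = {(real i, real_of_ereal (v (f i))) | i. f i \<noteq> 0}"

definition np_region :: "('a::zero \<Rightarrow> ereal) \<Rightarrow> (nat \<Rightarrow> 'a) \<Rightarrow> (real \<times> real) set" where
  "np_region v f = {p + (0, t) | p t. p \<in> convex hull (np_points v f) \<and> t \<ge> 0}"

definition newton_polygon :: "('a::zero \<Rightarrow> ereal) \<Rightarrow> (nat \<Rightarrow> 'a) \<Rightarrow> (real \<times> real) set" where
  "newton_polygon v f = {p \<in> np_region v f. \<forall>y < snd p. (fst p, y) \<notin> np_region v f}"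

definition np_vertices :: "('a::zero \<Rightarrow> ereal) \<Rightarrow> (nat \<Rightarrow> 'a) \<Rightarrow> (real \<times> real) set" where
  "np_vertices v f = {p. p extreme_point_of newton_polygon v f}"

definition np_num_edges :: "('a::zero \<Rightarrow> ereal) \<Rightarrow> (nat \<Rightarrow> 'a) \<Rightarrow> nat" where
  "np_num_edges v f = card (np_vertices v f) - 1"

definition np_break_points :: "('a::zero \<Rightarrow> ereal) \<Rightarrow> (nat \<Rightarrow> 'a) \<Rightarrow> (real \<times> real) set" where
  "np_break_points v f = {p \<in> np_vertices v f.
      (\<exists>q \<in> newton_polygon v f. fst q < fst p) \<and> (\<exists>q \<in> newton_polygon v f. fst p < fst q)}"

definition np_left_end :: "('a::zero \<Rightarrow> ereal) \<Rightarrow> (nat \<Rightarrow> 'a) \<Rightarrow> real \<times> real" where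
  "np_left_end v f = (THE p. p \<in> newton_polygon v f \<and> (\<forall>q \<in> newton_polygon v f. fst p \<le> fst q))"

end

theory Submission
  imports Defs
begin

text \<open>
  Let the first edge of the Newton polygon of h run from its left end point (m, v(h m)) to the
  first break point (d, e), and let L be the line through it: all coefficients of h lie on or
  above L, and those of degree greater than d lie at least some \<delta> > 0 above it. After dividing
  out t^m we may take m = 0. Start with f = h truncated at degree d and g = 1, so that the error
  h - f g lies \<delta> above L. Division with remainder by f, whose leading coefficient lies on L,
  writes the error as f Q + R with deg R < d; replacing f, g by f + R, g + Q leaves the degree
  of f and the valuations of its end coefficients unchanged, and the new error -R (g + Q - 1)
  lies another \<delta> higher. By completeness f and g converge coefficientwise, and the limit f is a
  left factor of h whose Newton polygon is exactly the first edge.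
\<close>

section \<open>Discrete valuations on skew fields\<close>

locale valued_division_ring =
  fixes v :: "'a::division_ring \<Rightarrow> ereal"
  assumes discrete: "discrete_valuation v"
begin

lemma v_eq_infinity_iff [simp]: "v x = \<infinity> \<longleftrightarrow> x = 0"
  using discrete unfolding discrete_valuation_def by (elim conjE allE)

lemma v_zero [simp]: "v 0 = \<infinity>"
  by simp

lemma v_finite:
  assumes "x \<noteq> 0"
  shows "v x = ereal (real_of_ereal (v x))"
proof -
  have "\<forall>x. x \<noteq> 0 \<longrightarrow> (\<exists>n::int. v x = ereal (of_int n))"
    using discrete unfolding discrete_valuation_def by (elim conjE)
  then obtain n :: int where "v x = ereal (of_int n)"
    using assms by blast
  then show ?thesis
    by simp
qed

lemma ereal_le_v_iff: "x \<noteq> 0 \<Longrightarrow> ereal a \<le> v x \<longleftrightarrow> a \<le> real_of_ereal (v x)"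
  by (subst v_finite) auto

lemma v_lower_bound: "\<exists>M. ereal M \<le> v x"
proof (cases "x = 0")
  case False
  then show ?thesis
    using v_finite by (metis order_refl)
qed simp

lemma v_add: "min (v x) (v y) \<le> v (x + y)"
  using discrete unfolding discrete_valuation_def by (elim conjE allE)

lemma v_mult: "v (x * y) = v x + v y"
  using discrete unfolding discrete_valuation_def by (elim conjE allE)

lemma v_one [simp]: "v 1 = 0"
proof -
  obtain r where r: "v 1 = ereal r"
    using v_finite[of 1] by simp
  then show ?thesis
    using v_mult[of 1 1] by (simp add: zero_ereal_def)
qed

lemma v_uminus [simp]: "v (- x) = v x"
proof -
  have "v 1 = v (-1) + v (-1)"
    using v_mult[of "-1" "-1"] by simp
  moreover obtain r where "v (-1) = ereal r"
    using v_finite[of "-1"] by simp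
  ultimately have "v (-1) = 0"
    by (simp add: zero_ereal_def)
  then show ?thesis
    using v_mult[of "-1" x] by simp
qed

lemma v_diff: "min (v x) (v y) \<le> v (x - y)"
  using v_add[of x "- y"] by simp

lemma v_add_eq_left:
  assumes "v x < v y"
  shows "v (x + y) = v x"
proof -
  have "min (v (x + y)) (v y) \<le> v x"
    using v_diff[of "x + y" y] by simp
  then have "v (x + y) \<le> v x"
    using assms by (auto simp: min_le_iff_disj)
  moreover have "v x \<le> v (x + y)"
    using v_add[of x y] assms by simp
  ultimately show ?thesis
    by (rule order_antisym)
qed

lemma v_inverse:
  assumes "x \<noteq> 0"
  shows "v (inverse x) = - v x"
proof -
  obtain r s where r: "v x = ereal r" and s: "v (inverse x) = ereal s"
    using assms v_finite[of x] v_finite[of "inverse x"] by force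
  have "v x + v (inverse x) = 0"
    using v_mult[of x "inverse x"] assms by simp
  then show ?thesis
    using r s by (simp add: zero_ereal_def eq_neg_iff_add_eq_0)
qed

lemma v_sum: "finite A \<Longrightarrow> (\<And>i. i \<in> A \<Longrightarrow> b \<le> v (x i)) \<Longrightarrow> b \<le> v (sum x A)"
proof (induction A rule: finite_induct)
  case (insert a A)
  then have "b \<le> min (v (x a)) (v (sum x A))"
    by simp
  also have "\<dots> \<le> v (x a + sum x A)"
    by (rule v_add)
  finally show ?case
    using insert by simp
qed simp

end

section \<open>Polynomials as coefficient sequences\<close>

definition deg_le :: "nat \<Rightarrow> (nat \<Rightarrow> 'a::zero) \<Rightarrow> bool" where
  "deg_le N p \<longleftrightarrow> (\<forall>i>N. p i = 0)"

definition pone :: "nat \<Rightarrow> 'a::{zero,one}" where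
  "pone = (\<lambda>i. if i = 0 then 1 else 0)"

definition pmonom :: "nat \<Rightarrow> 'a \<Rightarrow> nat \<Rightarrow> 'a::zero" where
  "pmonom k q = (\<lambda>i. if i = k then q else 0)"

definition pshift :: "nat \<Rightarrow> (nat \<Rightarrow> 'a) \<Rightarrow> nat \<Rightarrow> 'a::zero" where
  "pshift m p = (\<lambda>i. if i < m then 0 else p (i - m))"

lemma is_poly_iff_deg_le: "is_poly p \<longleftrightarrow> (\<exists>N. deg_le N p)"
  unfolding is_poly_def deg_le_def finite_nat_set_iff_bounded_le
  by (simp add: not_less[symmetric]) blast

lemma deg_le_mono: "deg_le M p \<Longrightarrow> M \<le> N \<Longrightarrow> deg_le N p"
  unfolding deg_le_def by auto

lemma deg_le_imp_le: "deg_le N p \<Longrightarrow> p i \<noteq> 0 \<Longrightarrow> i \<le> N"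
  unfolding deg_le_def by (meson not_le)

lemma pdeg_eqI:
  assumes "deg_le d p" "p d \<noteq> 0"
  shows "pdeg p = d"
proof -
  have "finite {i. p i \<noteq> 0}"
    using assms(1) by (auto intro: finite_subset[of _ "{..d}"] dest: deg_le_imp_le)
  then show ?thesis
    unfolding pdeg_def using assms by (auto intro!: Max_eqI dest: deg_le_imp_le)
qed

lemma pmul_add_left: "pmul (\<lambda>i. p i + q i) f n = pmul p f n + pmul q f n"
  unfolding pmul_def by (simp add: distrib_right sum.distrib)

lemma pmul_add_right: "pmul f (\<lambda>i. p i + q i) n = pmul f p n + pmul f q n"
  unfolding pmul_def by (simp add: distrib_left sum.distrib)

lemma pmul_diff_left: "pmul (\<lambda>i. p i - q i) (f :: nat \<Rightarrow> 'a::ring) n = pmul p f n - pmul q f n"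
  unfolding pmul_def by (simp add: left_diff_distrib sum_subtractf)

lemma pmul_diff_right: "pmul (f :: nat \<Rightarrow> 'a::ring) (\<lambda>i. p i - q i) n = pmul f p n - pmul f q n"
  unfolding pmul_def by (simp add: right_diff_distrib sum_subtractf)

lemma pmul_pone_right: "pmul f (pone :: nat \<Rightarrow> 'a::semiring_1) = f"
proof
  fix n
  have "pmul f pone n = (\<Sum>i\<le>n. if i = n then f i else 0)"
    unfolding pmul_def pone_def by (rule sum.cong) auto
  then show "pmul f pone n = f n"
    by simp
qed

lemma pmul_pmonom_right:
  "pmul f (pmonom k q) n = (if k \<le> n then f (n - k) * q else 0)"
proof -
  have "pmul f (pmonom k q) n = (\<Sum>j\<le>n. if j = n - k \<and> k \<le> n then f j * q else 0)"
    unfolding pmul_def pmonom_def by (rule sum.cong) auto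
  then show ?thesis
    by (cases "k \<le> n") simp_all
qed

lemma deg_le_pmul:
  assumes "deg_le M p" "deg_le N q"
  shows "deg_le (M + N) (pmul p q)"
  unfolding deg_le_def pmul_def
proof (intro allI impI sum.neutral ballI)
  fix n i assume "M + N < n" "i \<in> {..n}"
  then have "M < i \<or> N < n - i"
    by auto
  then show "p i * q (n - i) = 0"
    using assms unfolding deg_le_def by auto
qed

lemma pmul_pshift_left: "pmul (pshift m f) g = pshift m (pmul f g)"
proof
  fix n
  show "pmul (pshift m f) g n = pshift m (pmul f g) n"
  proof (cases "n < m")
    case True
    then show ?thesis
      unfolding pmul_def pshift_def by simp
  next
    case False
    have "pmul (pshift m f) g n = (\<Sum>i\<in>{m..n}. pshift m f i * g (n - i))"
      unfolding pmul_def by (rule sum.mono_neutral_right) (auto simp: pshift_def)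
    also have "\<dots> = (\<Sum>j\<in>{0..n - m}. pshift m f (j + m) * g (n - (j + m)))"
      using False sum.shift_bounds_cl_nat_ivl[of _ 0 m "n - m"] by simp
    also have "\<dots> = pmul f g (n - m)"
      unfolding pmul_def pshift_def by (simp add: atMost_atLeast0 diff_diff_eq add.commute)
    finally show ?thesis
      using False unfolding pshift_def by simp
  qed
qed

lemma pmul_newton_step:
  fixes f g h Q R :: "nat \<Rightarrow> 'a::ring_1"
  assumes "\<And>i. h i - pmul f g i = pmul f Q i + R i"
  shows "h n - pmul (\<lambda>i. f i + R i) (\<lambda>i. g i + Q i) n = - pmul R (\<lambda>i. g i + Q i - pone i) n"
  using assms[of n]
  by (simp add: pmul_add_left pmul_add_right pmul_diff_right pmul_pone_right algebra_simps)

section \<open>Coefficients above a line and division\<close>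

context valued_division_ring
begin

definition above_line :: "real \<Rightarrow> real \<Rightarrow> (nat \<Rightarrow> 'a) \<Rightarrow> bool" where
  "above_line lam a p \<longleftrightarrow> (\<forall>i. ereal (a + lam * real i) \<le> v (p i))"

lemma above_lineD: "above_line lam a p \<Longrightarrow> ereal (a + lam * real i) \<le> v (p i)"
  unfolding above_line_def by blast

lemma above_line_mono: "above_line lam a p \<Longrightarrow> b \<le> a \<Longrightarrow> above_line lam b p"
  unfolding above_line_def by (meson add_right_mono ereal_less_eq(3) order_trans)

lemma above_line_add:
  assumes "above_line lam a p" "above_line lam b q"
  shows "above_line lam (min a b) (\<lambda>i. p i + q i)"
  unfolding above_line_def
proof
  fix i
  have "ereal (min a b + lam * real i) \<le> ereal (a + lam * real i)"
    and "ereal (min a b + lam * real i) \<le> ereal (b + lam * real i)"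
    by simp_all
  then have "ereal (min a b + lam * real i) \<le> min (v (p i)) (v (q i))"
    using assms[THEN above_lineD, of i] by (meson min.boundedI order_trans)
  also have "\<dots> \<le> v (p i + q i)"
    by (rule v_add)
  finally show "ereal (min a b + lam * real i) \<le> v (p i + q i)" .
qed

lemma above_line_uminus: "above_line lam a p \<Longrightarrow> above_line lam a (\<lambda>i. - p i)"
  unfolding above_line_def by simp

lemma above_line_diff:
  assumes "above_line lam a p" "above_line lam b q"
  shows "above_line lam (min a b) (\<lambda>i. p i - q i)"
  using above_line_add[OF assms(1) above_line_uminus[OF assms(2)]] by simp

lemma above_line_pmonom: "ereal (a + lam * real k) \<le> v q \<Longrightarrow> above_line lam a (pmonom k q)"
  unfolding above_line_def pmonom_def by auto

lemma above_line_pmul: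
  assumes "above_line lam a p" "above_line lam b q"
  shows "above_line lam (a + b) (pmul p q)"
  unfolding above_line_def pmul_def
proof (intro allI v_sum)
  fix n i :: nat assume "i \<in> {..n}"
  then have "ereal (a + b + lam * real n) = ereal (a + lam * real i) + ereal (b + lam * real (n - i))"
    by (simp add: of_nat_diff algebra_simps)
  also have "\<dots> \<le> v (p i) + v (q (n - i))"
    using assms by (intro add_mono above_lineD)
  finally show "ereal (a + b + lam * real n) \<le> v (p i * q (n - i))"
    by (simp add: v_mult)
qed simp

lemma cancel_top_coefficient:
  assumes f: "deg_le d f" "above_line lam c f" "v (f d) = ereal (c + lam * real d)"
    and dN: "0 < d" "d \<le> N" and E: "deg_le N E" "above_line lam a E"
  defines "M \<equiv> pmonom (N - d) (inverse (f d) * E N)"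
  shows "deg_le (N - 1) (\<lambda>i. E i - pmul f M i)" and "above_line lam (a - c) M"
    and "above_line lam a (\<lambda>i. E i - pmul f M i)"
proof -
  have fd: "f d \<noteq> 0"
    using f(3) by auto
  have fM: "pmul f M i = (if N - d \<le> i then f (i - (N - d)) * (inverse (f d) * E N) else 0)" for i
    unfolding M_def by (rule pmul_pmonom_right)
  show "deg_le (N - 1) (\<lambda>i. E i - pmul f M i)"
    unfolding deg_le_def
  proof (intro allI impI)
    fix i assume "N - 1 < i"
    then consider "i = N" | "N < i"
      by linarith
    then show "E i - pmul f M i = 0"
    proof cases
      case 1
      then show ?thesis
        using fd dN by (simp add: fM mult.assoc[symmetric])
    next
      case 2
      then have "E i = 0" "f (i - (N - d)) = 0"
        using E(1) f(1) dN unfolding deg_le_def by auto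
      then show ?thesis
        by (simp add: fM)
    qed
  qed
  have "ereal (a - c + lam * real (N - d)) \<le> v (inverse (f d) * E N)"
  proof (cases "E N = 0")
    case False
    obtain r where r: "v (E N) = ereal r"
      using False v_finite by blast
    have "ereal (a + lam * real N) \<le> v (E N)"
      using E(2) by (rule above_lineD)
    then have "a - c + lam * real (N - d) \<le> r - (c + lam * real d)"
      using r dN by (simp add: of_nat_diff algebra_simps)
    moreover have "v (inverse (f d) * E N) = ereal (r - (c + lam * real d))"
      using r f(3) fd by (simp add: v_mult v_inverse)
    ultimately show ?thesis
      by simp
  qed simp
  then show M: "above_line lam (a - c) M"
    unfolding M_def by (rule above_line_pmonom)
  have "above_line lam a (pmul f M)"
    using above_line_pmul[OF f(2) M] by simp
  then show "above_line lam a (\<lambda>i. E i - pmul f M i)"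
    using above_line_diff[OF E(2)] by fastforce
qed

lemma line_division:
  assumes f: "deg_le d f" "above_line lam c f" "v (f d) = ereal (c + lam * real d)" and "0 < d"
  shows "deg_le N E \<Longrightarrow> above_line lam a E \<Longrightarrow>
    \<exists>Q R. (\<forall>i. E i = pmul f Q i + R i) \<and> deg_le (d - 1) R \<and> deg_le (N - d) Q
      \<and> above_line lam (a - c) Q \<and> above_line lam a R"
proof (induction N arbitrary: E rule: less_induct)
  case (less N)
  show ?case
  proof (cases "N < d")
    case True
    then have "deg_le (d - 1) E"
      using deg_le_mono[OF less.prems(1)] by simp
    then show ?thesis
      using less.prems by (intro exI[of _ "\<lambda>i. 0"] exI[of _ E]) (simp add: pmul_def deg_le_def above_line_def)
  next
    case False
    define M where "M = pmonom (N - d) (inverse (f d) * E N)"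
    note top = cancel_top_coefficient[OF f \<open>0 < d\<close> _ less.prems, folded M_def]
    obtain Q R where QR: "\<forall>i. E i - pmul f M i = pmul f Q i + R i" "deg_le (d - 1) R"
      "deg_le (N - 1 - d) Q" "above_line lam (a - c) Q" "above_line lam a R"
      using less.IH[OF _ top(1) top(3)] False \<open>0 < d\<close> by auto
    show ?thesis
    proof (intro exI conjI)
      show "\<forall>i. E i = pmul f (\<lambda>i. Q i + M i) i + R i"
        using QR(1) by (simp add: pmul_add_right algebra_simps)
      show "deg_le (N - d) (\<lambda>i. Q i + M i)"
        using QR(3) unfolding deg_le_def M_def pmonom_def by auto
      show "above_line lam (a - c) (\<lambda>i. Q i + M i)"
        using above_line_add[OF QR(4) top(2)] False by simp
    qed (use QR in auto)
  qed
qed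

lemma uniform_gap:
  assumes "is_poly h" "\<And>i. d < i \<Longrightarrow> h i \<noteq> 0 \<Longrightarrow> ereal (c + lam * real i) < v (h i)"
  obtains \<delta> where "0 < \<delta>" "\<And>i. d < i \<Longrightarrow> ereal (c + \<delta> + lam * real i) \<le> v (h i)"
proof
  define \<delta> where "\<delta> = Min (insert 1 ((\<lambda>i. real_of_ereal (v (h i)) - (c + lam * real i)) ` {i. d < i \<and> h i \<noteq> 0}))"
  have fin: "finite {i. d < i \<and> h i \<noteq> 0}"
    using assms(1) unfolding is_poly_def by (rule finite_subset[rotated]) auto
  have v_h: "v (h i) = ereal (real_of_ereal (v (h i)))" if "h i \<noteq> 0" for i
    using that by (rule v_finite)
  have "c + lam * real i < real_of_ereal (v (h i))" if "d < i" "h i \<noteq> 0" for i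
  proof -
    have "ereal (c + lam * real i) < ereal (real_of_ereal (v (h i)))"
      using assms(2)[OF that] v_h[OF that(2)] by simp
    then show ?thesis
      by simp
  qed
  then show "0 < \<delta>"
    unfolding \<delta>_def using fin by (subst Min_gr_iff) auto
  show "ereal (c + \<delta> + lam * real i) \<le> v (h i)" if "d < i" for i
  proof (cases "h i = 0")
    case False
    then have "\<delta> \<le> real_of_ereal (v (h i)) - (c + lam * real i)"
      unfolding \<delta>_def using fin that by (intro Min_le) auto
    then have "ereal (c + \<delta> + lam * real i) \<le> ereal (real_of_ereal (v (h i)))"
      by simp
    then show ?thesis
      using v_h[OF False] by simp
  qed simp
qed

section \<open>Convergence in the valuation topology\<close>

definition v_null :: "(nat \<Rightarrow> 'a) \<Rightarrow> bool" where
  "v_null a \<longleftrightarrow> ((\<lambda>K. v (a K)) \<longlonglongrightarrow> \<infinity>)"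

lemma v_null_iff: "v_null a \<longleftrightarrow> (\<forall>r. eventually (\<lambda>K. ereal r < v (a K)) sequentially)"
  unfolding v_null_def tendsto_PInfty ..

lemma v_null_const_iff [simp]: "v_null (\<lambda>K. x) \<longleftrightarrow> x = 0"
  unfolding v_null_def LIMSEQ_const_iff by simp

lemma v_null_add:
  assumes "v_null a" "v_null b"
  shows "v_null (\<lambda>K. a K + b K)"
  unfolding v_null_iff
proof
  fix r
  have "eventually (\<lambda>K. ereal r < v (a K) \<and> ereal r < v (b K)) sequentially"
    using assms unfolding v_null_iff by (simp add: eventually_conj)
  then show "eventually (\<lambda>K. ereal r < v (a K + b K)) sequentially"
    by eventually_elim (meson min_less_iff_conj less_le_trans v_add)
qed

lemma v_null_uminus: "v_null a \<Longrightarrow> v_null (\<lambda>K. - a K)"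
  unfolding v_null_def by simp

lemma v_null_diff: "v_null a \<Longrightarrow> v_null b \<Longrightarrow> v_null (\<lambda>K. a K - b K)"
  using v_null_add[OF _ v_null_uminus] by simp

lemma v_null_sum: "finite A \<Longrightarrow> (\<And>i. i \<in> A \<Longrightarrow> v_null (a i)) \<Longrightarrow> v_null (\<lambda>K. \<Sum>i\<in>A. a i K)"
  by (induction A rule: finite_induct) (simp_all add: v_null_add)

lemma v_null_mult_bounded:
  assumes "v_null a" "\<And>K. ereal M \<le> v (b K)"
  shows "v_null (\<lambda>K. a K * b K)" and "v_null (\<lambda>K. b K * a K)"
proof -
  have "eventually (\<lambda>K. ereal r < v (a K * b K) \<and> ereal r < v (b K * a K)) sequentially" for r
  proof -
    have "eventually (\<lambda>K. ereal (r - M) < v (a K)) sequentially"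
      using assms(1) unfolding v_null_iff by blast
    then show ?thesis
    proof eventually_elim
      case (elim K)
      have "ereal r < v (a K) + v (b K)"
        using elim assms(2)[of K] by (cases "v (a K)"; cases "v (b K)") auto
      then show ?case
        by (simp add: v_mult add.commute)
    qed
  qed
  then show "v_null (\<lambda>K. a K * b K)" "v_null (\<lambda>K. b K * a K)"
    unfolding v_null_iff by (blast intro: eventually_mono[OF _ conjunct1] eventually_mono[OF _ conjunct2])+
qed

lemma v_null_linear:
  assumes "0 < \<delta>" "\<And>K. ereal (\<alpha> + real K * \<delta>) \<le> v (a K)"
  shows "v_null a"
  unfolding v_null_iff eventually_sequentially
proof
  fix r
  obtain n :: nat where n: "(r - \<alpha>) / \<delta> < real n"
    using reals_Archimedean2 by blast
  show "\<exists>n. \<forall>K\<ge>n. ereal r < v (a K)"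
  proof (intro exI allI impI)
    fix K assume "n \<le> K"
    then have "r - \<alpha> < real K * \<delta>"
      using n assms(1) by (simp add: divide_less_eq) (smt (verit) mult_right_mono of_nat_le_iff)
    then have "ereal r < ereal (\<alpha> + real K * \<delta>)"
      by simp
    then show "ereal r < v (a K)"
      using assms(2) by (rule less_le_trans)
  qed
qed

lemma v_null_lower_bound:
  assumes "v_null (\<lambda>K. s - a K)" "\<And>K. ereal b \<le> v (a K)"
  shows "ereal b \<le> v s"
proof -
  obtain K where K: "ereal b < v (s - a K)"
    using assms(1) unfolding v_null_iff eventually_sequentially by blast
  have "ereal b \<le> min (v (s - a K)) (v (a K))"
    using K assms(2) by simp
  also have "\<dots> \<le> v (s - a K + a K)"
    by (rule v_add)
  finally show ?thesis
    by simp
qed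

lemma v_limit_eq:
  assumes "v_null (\<lambda>K. s - a K)" "\<And>K. ereal b \<le> v (a K - x)" "v x < ereal b"
  shows "v s = v x"
proof -
  have "v_null (\<lambda>K. (s - x) - (a K - x))"
    using assms(1) by simp
  then have "ereal b \<le> v (s - x)"
    using assms(2) by (rule v_null_lower_bound)
  then have "v x < v (s - x)"
    by (rule less_le_trans[OF assms(3)])
  then have "v (x + (s - x)) = v x"
    by (rule v_add_eq_left)
  then show ?thesis
    by simp
qed

lemma deg_le_limit:
  assumes "\<And>i. v_null (\<lambda>K. A i - a K i)" "\<And>K. deg_le n (a K)"
  shows "deg_le n A"
  unfolding deg_le_def
proof (intro allI impI)
  fix i assume "n < i"
  then have "a K i = 0" for K
    using assms(2) unfolding deg_le_def by blast
  then show "A i = 0"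
    using assms(1)[of i] by simp
qed

lemma above_line_limit:
  assumes "\<And>i. v_null (\<lambda>K. A i - a K i)" "\<And>K. above_line lam c (a K)"
  shows "above_line lam c A"
  unfolding above_line_def
  using v_null_lower_bound[OF assms(1)] above_lineD[OF assms(2)] by blast

end

locale complete_valued_division_ring = valued_division_ring +
  assumes complete: "complete_valuation v"
begin

lemma v_null_increments_imp_limit:
  assumes "v_null (\<lambda>j. a (Suc j) - a j)"
  shows "\<exists>s. v_null (\<lambda>K. s - a K)"
proof -
  obtain s where "(\<lambda>n. v (s - (\<Sum>j<n. a (Suc j) - a j))) \<longlonglongrightarrow> \<infinity>"
    using complete assms unfolding complete_valuation_def v_null_def
    by (elim allE[of _ "\<lambda>j. a (Suc j) - a j"] impE) auto
  then have "v_null (\<lambda>K. (s + a 0) - a K)"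
    unfolding v_null_def by (simp add: sum_lessThan_telescope algebra_simps)
  then show ?thesis ..
qed

lemma coefficientwise_limit:
  assumes "0 < \<delta>" and steps: "\<And>k. above_line lam (b + real k * \<delta>) (\<lambda>i. a (Suc k) i - a k i)"
  shows "\<exists>A. \<forall>i. v_null (\<lambda>K. A i - a K i)"
proof -
  have "\<exists>s. v_null (\<lambda>K. s - a K i)" for i
  proof (rule v_null_increments_imp_limit, rule v_null_linear[OF \<open>0 < \<delta>\<close>])
    fix K
    show "ereal (b + lam * real i + real K * \<delta>) \<le> v (a (Suc K) i - a K i)"
      using above_lineD[OF steps, of K i] by (simp add: algebra_simps)
  qed
  then show ?thesis
    by metis
qed

lemma pmul_limit:
  assumes F: "\<And>i. v_null (\<lambda>K. F i - FK K i)" and G: "\<And>i. v_null (\<lambda>K. G i - GK K i)"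
    and FK: "\<And>K. above_line lam c (FK K)" and H: "\<And>n. v_null (\<lambda>K. H n - pmul (FK K) (GK K) n)"
  shows "H = pmul F G"
proof
  fix n
  have "pmul F G n - pmul (FK K) (GK K) n
      = pmul (\<lambda>i. F i - FK K i) G n + pmul (FK K) (\<lambda>i. G i - GK K i) n" for K
    by (simp add: pmul_diff_left pmul_diff_right)
  moreover have "v_null (\<lambda>K. pmul (\<lambda>i. F i - FK K i) G n)"
    unfolding pmul_def
  proof (intro v_null_sum finite_atMost)
    fix i
    obtain M where M: "ereal M \<le> v (G (n - i))"
      using v_lower_bound by blast
    show "v_null (\<lambda>K. (F i - FK K i) * G (n - i))"
      by (rule v_null_mult_bounded(1)[OF F]) (rule M)
  qed
  moreover have "v_null (\<lambda>K. pmul (FK K) (\<lambda>i. G i - GK K i) n)"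
    unfolding pmul_def
  proof (intro v_null_sum finite_atMost)
    fix i
    show "v_null (\<lambda>K. FK K i * (G (n - i) - GK K (n - i)))"
      by (rule v_null_mult_bounded(2)[OF G]) (rule above_lineD[OF FK])
  qed
  ultimately have "v_null (\<lambda>K. pmul F G n - pmul (FK K) (GK K) n)"
    using v_null_add by presburger
  with H have "v_null (\<lambda>K. (H n - pmul (FK K) (GK K) n) - (pmul F G n - pmul (FK K) (GK K) n))"
    by (rule v_null_diff)
  then show "H n = pmul F G n"
    by simp
qed

end

section \<open>Hensel lifting along the first edge\<close>

locale first_edge_factorization = complete_valued_division_ring +
  fixes h :: "nat \<Rightarrow> 'a" and d N :: nat and lam c \<delta> :: real
  assumes d_pos: "0 < d" and deg_h: "deg_le N h" and h_above: "above_line lam c h"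
    and v_h_0: "v (h 0) = ereal c" and v_h_d: "v (h d) = ereal (c + lam * real d)"
    and \<delta>_pos: "0 < \<delta>" and h_high: "\<And>i. d < i \<Longrightarrow> ereal (c + \<delta> + lam * real i) \<le> v (h i)"
begin

definition h_low :: "nat \<Rightarrow> 'a" where
  "h_low = (\<lambda>i. if i \<le> d then h i else 0)"

definition approx_factors :: "nat \<Rightarrow> (nat \<Rightarrow> 'a) \<Rightarrow> (nat \<Rightarrow> 'a) \<Rightarrow> bool" where
  "approx_factors k f g \<longleftrightarrow> deg_le d f \<and> f d = h d \<and> above_line lam c f
    \<and> above_line lam (c + \<delta>) (\<lambda>i. f i - h_low i) \<and> deg_le (N - d) g
    \<and> above_line lam \<delta> (\<lambda>i. g i - pone i) \<and> deg_le N (\<lambda>i. h i - pmul f g i)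
    \<and> above_line lam (c + real (Suc k) * \<delta>) (\<lambda>i. h i - pmul f g i)"

lemma d_le_N: "d \<le> N"
  using deg_le_imp_le[OF deg_h] v_h_d by force

lemma approx_factors_0: "approx_factors 0 h_low pone"
  unfolding approx_factors_def pmul_pone_right
proof (intro conjI)
  show "above_line lam c h_low" "above_line lam (c + real (Suc 0) * \<delta>) (\<lambda>i. h i - h_low i)"
    using h_above h_high unfolding above_line_def h_low_def by (auto simp: algebra_simps)
qed (use deg_h in \<open>auto simp: deg_le_def h_low_def pone_def above_line_def\<close>)

lemma approx_factors_Suc:
  assumes "approx_factors k f g"
  shows "\<exists>f' g'. approx_factors (Suc k) f' g'
    \<and> above_line lam (c + real (Suc k) * \<delta>) (\<lambda>i. f' i - f i)
    \<and> above_line lam (real (Suc k) * \<delta>) (\<lambda>i. g' i - g i)"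
proof -
  note I = assms[unfolded approx_factors_def]
  have "v (f d) = ereal (c + lam * real d)"
    using I v_h_d by simp
  then have "\<exists>Q R. (\<forall>i. h i - pmul f g i = pmul f Q i + R i) \<and> deg_le (d - 1) R \<and> deg_le (N - d) Q
      \<and> above_line lam (c + real (Suc k) * \<delta> - c) Q \<and> above_line lam (c + real (Suc k) * \<delta>) R"
    using I by (intro line_division[OF _ _ _ d_pos]) auto
  then obtain Q R where QR: "\<And>i. h i - pmul f g i = pmul f Q i + R i" "deg_le (d - 1) R"
    "deg_le (N - d) Q" "above_line lam (real (Suc k) * \<delta>) Q" "above_line lam (c + real (Suc k) * \<delta>) R"
    by auto
  define f' where "f' = (\<lambda>i. f i + R i)"
  define g' where "g' = (\<lambda>i. g i + Q i)"
  have step: "\<delta> \<le> real (Suc k) * \<delta>"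
    using \<delta>_pos by simp
  have "above_line lam \<delta> (\<lambda>i. g i - pone i)"
    using I by blast
  then have "above_line lam (min \<delta> (real (Suc k) * \<delta>)) (\<lambda>i. (g i - pone i) + Q i)"
    using QR(4) by (rule above_line_add)
  then have g'_one: "above_line lam \<delta> (\<lambda>i. g' i - pone i)"
    using step by (simp add: g'_def min_absorb1 diff_add_eq)
  have error: "h i - pmul f' g' i = - pmul R (\<lambda>i. g' i - pone i) i" for i
    unfolding f'_def g'_def by (rule pmul_newton_step[OF QR(1)])
  have "deg_le (d - 1 + (N - d)) (pmul R (\<lambda>i. g' i - pone i))"
    using QR(2) I QR(3) by (intro deg_le_pmul) (auto simp: deg_le_def g'_def pone_def)
  then have "deg_le N (\<lambda>i. h i - pmul f' g' i)"
    using d_pos d_le_N unfolding error deg_le_def by auto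
  moreover have "above_line lam (c + real (Suc (Suc k)) * \<delta>) (\<lambda>i. h i - pmul f' g' i)"
    using above_line_uminus[OF above_line_pmul[OF QR(5) g'_one]] unfolding error
    by (simp add: algebra_simps)
  moreover have "deg_le d f'" "f' d = h d"
    using I QR(2) d_pos by (auto simp: f'_def deg_le_def)
  moreover have "above_line lam c f'"
    using above_line_add[OF _ QR(5), of c f] I \<delta>_pos unfolding f'_def
    by (auto elim: above_line_mono)
  moreover have "above_line lam (c + \<delta>) (\<lambda>i. f' i - h_low i)"
    using above_line_add[OF _ QR(5), of "c + \<delta>" "\<lambda>i. f i - h_low i"] I step unfolding f'_def
    by (auto simp: algebra_simps elim: above_line_mono)
  moreover have "deg_le (N - d) g'"
    using I QR(3) by (auto simp: g'_def deg_le_def)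
  ultimately show ?thesis
    using QR(4,5) g'_one unfolding approx_factors_def
    by (intro exI[of _ f'] exI[of _ g']) (simp add: f'_def g'_def)
qed

lemma approx_factors_sequence:
  "\<exists>F G. \<forall>k. approx_factors k (F k) (G k)
    \<and> above_line lam (c + \<delta> + real k * \<delta>) (\<lambda>i. F (Suc k) i - F k i)
    \<and> above_line lam (\<delta> + real k * \<delta>) (\<lambda>i. G (Suc k) i - G k i)"
proof -
  have "\<exists>FG. \<forall>k. approx_factors k (fst (FG k)) (snd (FG k))
    \<and> above_line lam (c + real (Suc k) * \<delta>) (\<lambda>i. fst (FG (Suc k)) i - fst (FG k) i)
    \<and> above_line lam (real (Suc k) * \<delta>) (\<lambda>i. snd (FG (Suc k)) i - snd (FG k) i)"
  proof (rule dependent_nat_choice)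
    show "\<exists>FG. approx_factors 0 (fst FG) (snd FG)"
      using approx_factors_0 by auto
  next
    fix FG k assume "approx_factors k (fst FG) (snd FG)"
    then obtain f' g' where "approx_factors (Suc k) f' g'"
      "above_line lam (c + real (Suc k) * \<delta>) (\<lambda>i. f' i - fst FG i)"
      "above_line lam (real (Suc k) * \<delta>) (\<lambda>i. g' i - snd FG i)"
      using approx_factors_Suc by blast
    then show "\<exists>FG'. approx_factors (Suc k) (fst FG') (snd FG')
      \<and> above_line lam (c + real (Suc k) * \<delta>) (\<lambda>i. fst FG' i - fst FG i)
      \<and> above_line lam (real (Suc k) * \<delta>) (\<lambda>i. snd FG' i - snd FG i)"
      by (intro exI[of _ "(f', g')"]) simp
  qed
  then obtain FG where "\<forall>k. approx_factors k (fst (FG k)) (snd (FG k))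
    \<and> above_line lam (c + real (Suc k) * \<delta>) (\<lambda>i. fst (FG (Suc k)) i - fst (FG k) i)
    \<and> above_line lam (real (Suc k) * \<delta>) (\<lambda>i. snd (FG (Suc k)) i - snd (FG k) i)" ..
  then show ?thesis
    by (intro exI[of _ "\<lambda>k. fst (FG k)"] exI[of _ "\<lambda>k. snd (FG k)"]) (simp add: algebra_simps)
qed

theorem factorization:
  "\<exists>f g. deg_le d f \<and> f d = h d \<and> v (f 0) = ereal c \<and> above_line lam c f \<and> deg_le (N - d) g
    \<and> h = pmul f g"
proof -
  obtain FK GK where seq: "\<And>k. approx_factors k (FK k) (GK k)"
    "\<And>k. above_line lam (c + \<delta> + real k * \<delta>) (\<lambda>i. FK (Suc k) i - FK k i)"
    "\<And>k. above_line lam (\<delta> + real k * \<delta>) (\<lambda>i. GK (Suc k) i - GK k i)"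
    using approx_factors_sequence by blast
  note I = seq(1)[unfolded approx_factors_def]
  obtain F where F: "\<And>i. v_null (\<lambda>K. F i - FK K i)"
    using coefficientwise_limit[OF \<delta>_pos seq(2)] by blast
  obtain G where G: "\<And>i. v_null (\<lambda>K. G i - GK K i)"
    using coefficientwise_limit[OF \<delta>_pos seq(3)] by blast
  have "deg_le d F"
    by (rule deg_le_limit[OF F]) (use I in blast)
  moreover have "deg_le (N - d) G"
    by (rule deg_le_limit[OF G]) (use I in blast)
  moreover have "above_line lam c F"
    by (rule above_line_limit[OF F]) (use I in blast)
  moreover have "F d = h d"
    using F[of d] I by simp
  moreover have "v (F 0) = ereal c"
  proof -
    have "ereal (c + \<delta>) \<le> v (FK K 0 - h 0)" for K
    proof -
      have "above_line lam (c + \<delta>) (\<lambda>i. FK K i - h_low i)"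
        using I by blast
      from above_lineD[OF this, of 0] show ?thesis
        by (simp add: h_low_def)
    qed
    moreover have "v (h 0) < ereal (c + \<delta>)"
      using v_h_0 \<delta>_pos by simp
    ultimately have "v (F 0) = v (h 0)"
      by (rule v_limit_eq[OF F])
    then show ?thesis
      using v_h_0 by simp
  qed
  moreover have "h = pmul F G"
  proof (rule pmul_limit[OF F G])
    show "above_line lam c (FK K)" for K
      using I by blast
    fix n
    have "ereal (c + \<delta> + lam * real n + real K * \<delta>) \<le> v (h n - pmul (FK K) (GK K) n)" for K
      using I[of K] above_lineD[of lam "c + real (Suc K) * \<delta>" "\<lambda>i. h i - pmul (FK K) (GK K) i" n]
      by (simp add: algebra_simps)
    then show "v_null (\<lambda>K. h n - pmul (FK K) (GK K) n)"
      by (rule v_null_linear[OF \<delta>_pos])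
  qed
  ultimately show ?thesis
    by blast
qed

end

context complete_valued_division_ring
begin

lemma first_edge_factor:
  assumes "m < d" "is_poly h" and low: "\<And>i. i < m \<Longrightarrow> h i = 0" and "above_line lam c h"
    and v_h_m: "v (h m) = ereal (c + lam * real m)" and v_h_d: "v (h d) = ereal (c + lam * real d)"
    and "\<And>i. d < i \<Longrightarrow> h i \<noteq> 0 \<Longrightarrow> ereal (c + lam * real i) < v (h i)"
  shows "\<exists>f g. deg_le d f \<and> (\<forall>i<m. f i = 0) \<and> f d = h d \<and> v (f m) = v (h m) \<and> above_line lam c f
    \<and> is_poly g \<and> h = pmul f g"
proof -
  obtain N where "deg_le N h"
    using \<open>is_poly h\<close> is_poly_iff_deg_le by blast
  obtain \<delta> where "0 < \<delta>" and high: "\<And>i. d < i \<Longrightarrow> ereal (c + \<delta> + lam * real i) \<le> v (h i)"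
    using uniform_gap[OF assms(2,7)] by blast
  define h' where "h' i = h (i + m)" for i
  interpret first_edge_factorization v h' "d - m" "N - m" lam "c + lam * real m" \<delta>
  proof
    show "deg_le (N - m) h'"
      using \<open>deg_le N h\<close> unfolding deg_le_def h'_def by auto
    show "above_line lam (c + lam * real m) h'"
      unfolding above_line_def h'_def
    proof
      fix i
      show "ereal (c + lam * real m + lam * real i) \<le> v (h (i + m))"
        using above_lineD[OF \<open>above_line lam c h\<close>, of "i + m"] by (simp add: algebra_simps)
    qed
    show "v (h' (d - m)) = ereal (c + lam * real m + lam * real (d - m))"
      using v_h_d \<open>m < d\<close> unfolding h'_def by (simp add: of_nat_diff algebra_simps)
    show "ereal (c + lam * real m + \<delta> + lam * real i) \<le> v (h' i)" if "d - m < i" for i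
      using high[of "i + m"] that unfolding h'_def by (simp add: algebra_simps)
  qed (use \<open>m < d\<close> \<open>0 < \<delta>\<close> v_h_m complete in \<open>simp_all add: h'_def\<close>)
  obtain f' g where f': "deg_le (d - m) f'" "f' (d - m) = h d" "v (f' 0) = v (h m)"
    "above_line lam (c + lam * real m) f'" and g: "deg_le (N - m - (d - m)) g" "h' = pmul f' g"
    using factorization \<open>m < d\<close> v_h_m unfolding h'_def by auto
  have "h = pshift m h'"
    using low unfolding pshift_def h'_def by (auto simp: fun_eq_iff)
  then have "h = pmul (pshift m f') g"
    by (simp add: g(2) pmul_pshift_left)
  moreover have "above_line lam c (pshift m f')"
    unfolding above_line_def pshift_def
  proof
    fix i
    show "ereal (c + lam * real i) \<le> v (if i < m then 0 else f' (i - m))"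
      using above_lineD[OF f'(4), of "i - m"] by (auto simp: of_nat_diff algebra_simps)
  qed
  moreover have "deg_le d (pshift m f')"
    using f'(1) \<open>m < d\<close> unfolding deg_le_def pshift_def by auto
  moreover have "is_poly g"
    using g(1) is_poly_iff_deg_le by blast
  moreover have "pshift m f' d = h d" "v (pshift m f' m) = v (h m)" "\<forall>i<m. pshift m f' i = 0"
    using f'(2,3) \<open>m < d\<close> low unfolding pshift_def by auto
  ultimately show ?thesis
    by metis
qed

end

section \<open>Geometry of Newton polygons\<close>

lemma np_region_subset:
  assumes "convex C" "np_points v p \<subseteq> C" "\<And>q t. q \<in> C \<Longrightarrow> 0 \<le> t \<Longrightarrow> q + (0, t) \<in> C"
  shows "np_region v p \<subseteq> C"
  using hull_minimal[of "np_points v p" C convex] assms unfolding np_region_def by blast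

lemma np_region_above_line:
  assumes "\<And>i. p i \<noteq> 0 \<Longrightarrow> \<alpha> * real i + \<beta> \<le> real_of_ereal (v (p i))" and "q \<in> np_region v p"
  shows "\<alpha> * fst q + \<beta> \<le> snd q"
proof -
  have "{q :: real \<times> real. \<alpha> * fst q + \<beta> \<le> snd q} = {q. inner (\<alpha>, - 1) q \<le> - \<beta>}"
    by (auto simp: inner_Pair_0 inner_Pair)
  then have "convex {q :: real \<times> real. \<alpha> * fst q + \<beta> \<le> snd q}"
    using convex_halfspace_le by metis
  then have "np_region v p \<subseteq> {q. \<alpha> * fst q + \<beta> \<le> snd q}"
    using assms(1) by (intro np_region_subset) (auto simp: np_points_def)
  then show ?thesis
    using assms(2) by blast
qed

lemma np_region_x_bounds:
  assumes "\<And>i. p i \<noteq> 0 \<Longrightarrow> lo \<le> real i \<and> real i \<le> hi" and "q \<in> np_region v p"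
  shows "lo \<le> fst q \<and> fst q \<le> hi"
proof -
  have "convex ({lo..hi} \<times> (UNIV :: real set))"
    by (simp add: convex_Times)
  then have "np_region v p \<subseteq> {lo..hi} \<times> UNIV"
    using assms(1) by (intro np_region_subset) (auto simp: np_points_def)
  then show ?thesis
    using assms(2) by auto
qed

lemma newton_polygon_subset_region: "newton_polygon v p \<subseteq> np_region v p"
  unfolding newton_polygon_def by auto

lemma newton_polygon_eqI:
  assumes "q \<in> newton_polygon v p" "r \<in> newton_polygon v p" "fst q = fst r"
  shows "q = r"
proof -
  have "\<not> snd q < snd r" and "\<not> snd r < snd q"
    using assms unfolding newton_polygon_def by (metis (no_types, lifting) mem_Collect_eq prod.collapse)+
  then show ?thesis
    using assms(3) by (simp add: prod_eq_iff)
qed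

lemma closed_segment_subset_np_region:
  assumes "a \<in> np_points v p" "b \<in> np_points v p"
  shows "closed_segment a b \<subseteq> np_region v p"
proof -
  have "closed_segment a b \<subseteq> convex hull (np_points v p)"
    using assms by (intro closed_segment_subset) (auto intro: hull_inc)
  then show ?thesis
    unfolding np_region_def by force
qed

lemma newton_polygon_if_on_supporting_line:
  assumes "\<And>i. p i \<noteq> 0 \<Longrightarrow> \<alpha> * real i + \<beta> \<le> real_of_ereal (v (p i))"
    and "q \<in> np_region v p" "snd q = \<alpha> * fst q + \<beta>"
  shows "q \<in> newton_polygon v p"
  unfolding newton_polygon_def
  using np_region_above_line[where p=p and v=v, OF assms(1)] assms(2,3) by fastforce

lemma line_point_in_closed_segment:
  fixes a b x :: real
  assumes "a < b" "a \<le> x" "x \<le> b"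
  shows "(x, \<alpha> * x + \<beta>) \<in> closed_segment (a, \<alpha> * a + \<beta>) (b, \<alpha> * b + \<beta>)"
  unfolding in_segment
proof (intro exI conjI)
  define u where "u = (x - a) / (b - a)"
  show "0 \<le> u" "u \<le> 1"
    unfolding u_def using assms by auto
  have "u * (b - a) = x - a"
    unfolding u_def using assms by simp
  then have x: "x = (1 - u) * a + u * b"
    by (simp add: algebra_simps)
  show "(x, \<alpha> * x + \<beta>) = (1 - u) *\<^sub>R (a, \<alpha> * a + \<beta>) + u *\<^sub>R (b, \<alpha> * b + \<beta>)"
    unfolding x by (simp add: algebra_simps)
qed

lemma line_point_in_open_segment:
  fixes a b x :: real
  assumes "a < x" "x < b"
  shows "(x, \<alpha> * x + \<beta>) \<in> open_segment (a, \<alpha> * a + \<beta>) (b, \<alpha> * b + \<beta>)"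
proof -
  have "(x, \<alpha> * x + \<beta>) \<in> closed_segment (a, \<alpha> * a + \<beta>) (b, \<alpha> * b + \<beta>)"
    using assms by (intro line_point_in_closed_segment) auto
  then show ?thesis
    using assms unfolding open_segment_def by auto
qed

lemma closed_segment_on_line:
  fixes a b :: real
  assumes "q \<in> closed_segment (a, \<alpha> * a + \<beta>) (b, \<alpha> * b + \<beta>)"
  shows "snd q = \<alpha> * fst q + \<beta>"
  using assms unfolding in_segment by (auto simp: algebra_simps)

lemma closed_segment_subset_newton_polygon:
  fixes a b :: nat
  assumes above: "\<And>i. p i \<noteq> 0 \<Longrightarrow> \<alpha> * real i + \<beta> \<le> real_of_ereal (v (p i))"
    and ab: "p a \<noteq> 0" "p b \<noteq> 0"
    and on_line: "real_of_ereal (v (p a)) = \<alpha> * real a + \<beta>" "real_of_ereal (v (p b)) = \<alpha> * real b + \<beta>"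
  shows "closed_segment (real a, \<alpha> * real a + \<beta>) (real b, \<alpha> * real b + \<beta>) \<subseteq> newton_polygon v p"
proof -
  have "(real a, \<alpha> * real a + \<beta>) \<in> np_points v p" "(real b, \<alpha> * real b + \<beta>) \<in> np_points v p"
    using ab on_line unfolding np_points_def by force+
  then have "closed_segment (real a, \<alpha> * real a + \<beta>) (real b, \<alpha> * real b + \<beta>) \<subseteq> np_region v p"
    by (rule closed_segment_subset_np_region)
  then show ?thesis
    using closed_segment_on_line newton_polygon_if_on_supporting_line[where p=p and v=v, OF above]
    by blast
qed

lemma newton_polygon_eq_segment:
  fixes p :: "nat \<Rightarrow> 'a::zero" and a b :: nat
  assumes "a < b" and ab: "p a \<noteq> 0" "p b \<noteq> 0" and supp: "\<And>i. p i \<noteq> 0 \<Longrightarrow> a \<le> i \<and> i \<le> b"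
    and above: "\<And>i. p i \<noteq> 0 \<Longrightarrow> \<alpha> * real i + \<beta> \<le> real_of_ereal (v (p i))"
    and on_line: "real_of_ereal (v (p a)) = \<alpha> * real a + \<beta>" "real_of_ereal (v (p b)) = \<alpha> * real b + \<beta>"
  shows "newton_polygon v p = closed_segment (real a, \<alpha> * real a + \<beta>) (real b, \<alpha> * real b + \<beta>)"
    (is "_ = ?S")
proof
  show S: "?S \<subseteq> newton_polygon v p"
    using closed_segment_subset_newton_polygon[OF above ab on_line] .
  show "newton_polygon v p \<subseteq> ?S"
  proof
    fix q assume q: "q \<in> newton_polygon v p"
    then have "q \<in> np_region v p"
      using newton_polygon_subset_region by blast
    then have "real a \<le> fst q \<and> fst q \<le> real b" "\<alpha> * fst q + \<beta> \<le> snd q"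
      using supp by (auto intro!: np_region_x_bounds[where p=p and v=v]
          np_region_above_line[where p=p and v=v, OF above])
    then have q': "(fst q, \<alpha> * fst q + \<beta>) \<in> ?S" "\<alpha> * fst q + \<beta> \<le> snd q"
      using \<open>a < b\<close> by (auto intro: line_point_in_closed_segment)
    then have "\<not> \<alpha> * fst q + \<beta> < snd q"
      using q S newton_polygon_subset_region unfolding newton_polygon_def by blast
    then have "q = (fst q, \<alpha> * fst q + \<beta>)"
      using q'(2) by (simp add: prod_eq_iff)
    then show "q \<in> ?S"
      using q'(1) by simp
  qed
qed

lemma on_line_if_combination_on_line:
  fixes a b :: "real \<times> real"
  assumes "\<alpha> * fst a + \<beta> \<le> snd a" "\<alpha> * fst b + \<beta> \<le> snd b" "0 < u" "u < 1"
    and "snd ((1 - u) *\<^sub>R a + u *\<^sub>R b) = \<alpha> * fst ((1 - u) *\<^sub>R a + u *\<^sub>R b) + \<beta>"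
  shows "snd a = \<alpha> * fst a + \<beta> \<and> snd b = \<alpha> * fst b + \<beta>"
proof -
  have "(1 - u) * (snd a - (\<alpha> * fst a + \<beta>)) + u * (snd b - (\<alpha> * fst b + \<beta>)) = 0"
    using assms(5) by (simp add: algebra_simps)
  moreover have "0 \<le> (1 - u) * (snd a - (\<alpha> * fst a + \<beta>))" "0 \<le> u * (snd b - (\<alpha> * fst b + \<beta>))"
    using assms(1-4) by simp_all
  ultimately show ?thesis
    using assms(3,4) by (simp add: add_nonneg_eq_0_iff)
qed

lemma extreme_point_of_two_supporting_lines:
  fixes P :: "(real \<times> real) set"
  assumes above: "\<And>q. q \<in> P \<Longrightarrow> \<alpha> * fst q + \<beta> \<le> snd q" "\<And>q. q \<in> P \<Longrightarrow> \<alpha>' * fst q + \<beta>' \<le> snd q"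
    and "\<alpha> \<noteq> \<alpha>'" and "p \<in> P" and on_lines: "snd p = \<alpha> * fst p + \<beta>" "snd p = \<alpha>' * fst p + \<beta>'"
    and graph: "\<And>q r. q \<in> P \<Longrightarrow> r \<in> P \<Longrightarrow> fst q = fst r \<Longrightarrow> q = r"
  shows "p extreme_point_of P"
  unfolding extreme_point_of_def
proof (intro conjI ballI notI \<open>p \<in> P\<close>)
  fix a b assume ab: "a \<in> P" "b \<in> P" "p \<in> open_segment a b"
  then obtain u where u: "a \<noteq> b" "0 < u" "u < 1" "p = (1 - u) *\<^sub>R a + u *\<^sub>R b"
    unfolding in_segment by blast
  have "snd a = \<alpha> * fst a + \<beta> \<and> snd b = \<alpha> * fst b + \<beta>"
    and "snd a = \<alpha>' * fst a + \<beta>' \<and> snd b = \<alpha>' * fst b + \<beta>'"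
    using on_line_if_combination_on_line[of \<alpha> a \<beta> b u] on_line_if_combination_on_line[of \<alpha>' a \<beta>' b u]
      above ab u on_lines by auto
  then have "(\<alpha> - \<alpha>') * fst a = (\<alpha> - \<alpha>') * fst b"
    by (simp add: algebra_simps)
  then show False
    using graph ab u(1) \<open>\<alpha> \<noteq> \<alpha>'\<close> by simp
qed

lemma minimal_slope_line:
  fixes S :: "nat set" and w :: "nat \<Rightarrow> real"
  assumes "finite S" "m \<in> S" "\<And>i. i \<in> S \<Longrightarrow> m \<le> i" "\<exists>i\<in>S. m < i"
  shows "\<exists>D lam. D \<in> S \<and> m < D \<and> w D = w m + lam * (real D - real m)
    \<and> (\<forall>i\<in>S. w m + lam * (real i - real m) \<le> w i)
    \<and> (\<forall>i\<in>S. D < i \<longrightarrow> w m + lam * (real i - real m) < w i)"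
proof -
  define T where "T = {i \<in> S. m < i}"
  define slope where "slope i = (w i - w m) / (real i - real m)" for i
  define lam where "lam = Min (slope ` T)"
  define D where "D = Max {i \<in> T. slope i = lam}"
  have T: "finite T" "T \<noteq> {}"
    using assms unfolding T_def by auto
  then have "lam \<in> slope ` T" and lam_le: "\<And>i. i \<in> T \<Longrightarrow> lam \<le> slope i"
    unfolding lam_def by auto
  then have "{i \<in> T. slope i = lam} \<noteq> {}"
    by auto
  moreover have fin: "finite {i \<in> T. slope i = lam}"
    using T by simp
  ultimately have D_in: "D \<in> {i \<in> T. slope i = lam}"
    unfolding D_def by (rule Max_in[rotated])
  have D_max: "\<And>i. i \<in> T \<Longrightarrow> slope i = lam \<Longrightarrow> i \<le> D"
    unfolding D_def using fin by simp
  from D_in have D: "D \<in> S" "m < D" "slope D = lam"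
    unfolding T_def by auto
  show ?thesis
  proof (intro exI conjI ballI impI)
    show "w D = w m + lam * (real D - real m)"
      using D unfolding slope_def by (simp add: field_simps)
    show "w m + lam * (real i - real m) \<le> w i" if "i \<in> S" for i
    proof (cases "i = m")
      case False
      then have "i \<in> T"
        using that assms(3) unfolding T_def by force
      then show ?thesis
        using lam_le[of i] unfolding slope_def T_def by (simp add: le_divide_eq)
    qed simp
    show "w m + lam * (real i - real m) < w i" if "i \<in> S" "D < i" for i
    proof -
      have "i \<in> T"
        using that D unfolding T_def by auto
      then have "lam < slope i"
        using lam_le[of i] D_max[of i] that(2) by fastforce
      then show ?thesis
        using \<open>i \<in> T\<close> unfolding slope_def T_def by (simp add: less_divide_eq)
    qed
  qed (use D in auto)
qed

lemma tilted_line_below: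
  fixes S :: "nat set" and L w :: "nat \<Rightarrow> real"
  assumes "finite S" "\<And>i. i \<in> S \<Longrightarrow> L i \<le> w i" "\<And>i. i \<in> S \<Longrightarrow> D < i \<Longrightarrow> L i < w i"
  obtains \<eta> where "0 < \<eta>" "\<And>i. i \<in> S \<Longrightarrow> L i + \<eta> * (real i - real D) \<le> w i"
proof
  define \<eta> where "\<eta> = Min (insert 1 ((\<lambda>i. (w i - L i) / (real i - real D)) ` {i \<in> S. D < i}))"
  show "0 < \<eta>"
    unfolding \<eta>_def using assms by auto
  show "L i + \<eta> * (real i - real D) \<le> w i" if "i \<in> S" for i
  proof (cases "D < i")
    case True
    then have "\<eta> \<le> (w i - L i) / (real i - real D)"
      unfolding \<eta>_def using assms(1) that by auto
    then show ?thesis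
      using True by (simp add: le_divide_eq)
  next
    case False
    then have "\<eta> * (real i - real D) \<le> 0"
      using \<open>0 < \<eta>\<close> by (simp add: mult_nonneg_nonpos)
    then show ?thesis
      using assms(2)[OF that] by simp
  qed
qed

lemma newton_polygon_x_range:
  assumes "is_poly p" "q \<in> newton_polygon v p"
  shows "{i. p i \<noteq> 0} \<noteq> {}" and "real (Min {i. p i \<noteq> 0}) \<le> fst q" and "fst q \<le> real (Max {i. p i \<noteq> 0})"
proof -
  have q: "q \<in> np_region v p"
    using assms(2) newton_polygon_subset_region by blast
  show ne: "{i. p i \<noteq> 0} \<noteq> {}"
  proof
    assume "{i. p i \<noteq> 0} = {}"
    then have "1 \<le> fst q \<and> fst q \<le> 0"
      by (intro np_region_x_bounds[OF _ q]) auto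
    then show False
      by linarith
  qed
  have "real (Min {i. p i \<noteq> 0}) \<le> fst q \<and> fst q \<le> real (Max {i. p i \<noteq> 0})"
    using assms(1) unfolding is_poly_def by (intro np_region_x_bounds[OF _ q]) auto
  then show "real (Min {i. p i \<noteq> 0}) \<le> fst q" "fst q \<le> real (Max {i. p i \<noteq> 0})"
    by simp_all
qed

lemma support_right_of_min:
  assumes "is_poly p" "q \<in> newton_polygon v p" "r \<in> newton_polygon v p" "fst q < fst r"
  shows "\<exists>i. p i \<noteq> 0 \<and> Min {i. p i \<noteq> 0} < i"
proof (rule ccontr)
  let ?S = "{i. p i \<noteq> 0}"
  assume no_right: "\<not> ?thesis"
  have S: "finite ?S" "?S \<noteq> {}"
    using assms(1) newton_polygon_x_range(1)[OF assms(1,2)] unfolding is_poly_def by auto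
  then have "Max ?S \<in> ?S"
    by (rule Max_in)
  then have "\<not> Min ?S < Max ?S" "Min ?S \<le> Max ?S"
    using no_right S(1) by auto
  then have "Max ?S = Min ?S"
    by simp
  then show False
    using newton_polygon_x_range(2)[OF assms(1,2)] newton_polygon_x_range(3)[OF assms(1,3)] assms(4)
    by simp
qed

lemma extreme_point_at_end_of_edge:
  assumes "is_poly p"
    and above: "\<And>i. p i \<noteq> 0 \<Longrightarrow> \<alpha> * real i + \<beta> \<le> real_of_ereal (v (p i))"
    and strict: "\<And>i. p i \<noteq> 0 \<Longrightarrow> D < i \<Longrightarrow> \<alpha> * real i + \<beta> < real_of_ereal (v (p i))"
    and D: "p D \<noteq> 0" "real_of_ereal (v (p D)) = \<alpha> * real D + \<beta>"
  shows "(real D, \<alpha> * real D + \<beta>) extreme_point_of newton_polygon v p"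
proof -
  have "finite {i. p i \<noteq> 0}"
    using assms(1) unfolding is_poly_def .
  then obtain \<eta> where "0 < \<eta>"
    and tilted: "\<And>i. i \<in> {i. p i \<noteq> 0} \<Longrightarrow> \<alpha> * real i + \<beta> + \<eta> * (real i - real D) \<le> real_of_ereal (v (p i))"
    by (rule tilted_line_below[of _ "\<lambda>i. \<alpha> * real i + \<beta>" "\<lambda>i. real_of_ereal (v (p i))" D])
      (use above strict in auto)
  have tilted': "(\<alpha> + \<eta>) * real i + (\<beta> - \<eta> * real D) \<le> real_of_ereal (v (p i))" if "p i \<noteq> 0" for i
    using tilted[of i] that by (simp add: algebra_simps)
  have "closed_segment (real D, \<alpha> * real D + \<beta>) (real D, \<alpha> * real D + \<beta>) \<subseteq> newton_polygon v p"
    using closed_segment_subset_newton_polygon[OF above D(1) D(1) D(2) D(2)] .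
  then have "(real D, \<alpha> * real D + \<beta>) \<in> newton_polygon v p"
    by simp
  moreover have "\<alpha> * fst q + \<beta> \<le> snd q" "(\<alpha> + \<eta>) * fst q + (\<beta> - \<eta> * real D) \<le> snd q"
    if "q \<in> newton_polygon v p" for q
    using that newton_polygon_subset_region
    by (blast intro: np_region_above_line[where p=p and v=v, OF above]
        np_region_above_line[where p=p and v=v, OF tilted'])+
  ultimately show ?thesis
    using \<open>0 < \<eta>\<close>
    by (intro extreme_point_of_two_supporting_lines[where \<alpha>' = "\<alpha> + \<eta>" and \<beta>' = "\<beta> - \<eta> * real D",
          OF _ _ _ _ _ _ newton_polygon_eqI]) (auto simp: algebra_simps)
qed

lemma np_left_end_eqI:
  assumes "q \<in> newton_polygon v p" "\<And>r. r \<in> newton_polygon v p \<Longrightarrow> fst q \<le> fst r"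
  shows "np_left_end v p = q"
  unfolding np_left_end_def
proof (rule the_equality)
  fix r assume r: "r \<in> newton_polygon v p \<and> (\<forall>q \<in> newton_polygon v p. fst r \<le> fst q)"
  then have "fst r = fst q"
    using assms by (meson order_antisym)
  then show "r = q"
    using r assms(1) by (intro newton_polygon_eqI) auto
qed (use assms in blast)

lemma first_edge_of_newton_polygon:
  fixes h :: "nat \<Rightarrow> 'a::zero" and v :: "'a \<Rightarrow> ereal"
  assumes poly: "is_poly h" and q: "q \<in> newton_polygon v h" "r \<in> newton_polygon v h" "fst q < fst r"
  defines "w \<equiv> \<lambda>i. real_of_ereal (v (h i))"
  obtains m D \<alpha> \<beta> where "m < D" "h m \<noteq> 0" "h D \<noteq> 0" "\<And>i. i < m \<Longrightarrow> h i = 0"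
    "\<And>i. h i \<noteq> 0 \<Longrightarrow> \<alpha> * real i + \<beta> \<le> w i" "\<And>i. h i \<noteq> 0 \<Longrightarrow> D < i \<Longrightarrow> \<alpha> * real i + \<beta> < w i"
    "w m = \<alpha> * real m + \<beta>" "w D = \<alpha> * real D + \<beta>"
    "(real D, \<alpha> * real D + \<beta>) extreme_point_of newton_polygon v h"
    "\<And>p. p \<in> newton_polygon v h \<Longrightarrow> real m \<le> fst p"
    "np_left_end v h = (real m, \<alpha> * real m + \<beta>)"
proof -
  define S where "S = {i. h i \<noteq> 0}"
  define m where "m = Min S"
  have S: "finite S" "S \<noteq> {}"
    using poly newton_polygon_x_range(1)[OF poly q(1)] unfolding S_def is_poly_def by auto
  then have m: "m \<in> S" "\<And>i. i \<in> S \<Longrightarrow> m \<le> i"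
    unfolding m_def by auto
  have left: "real m \<le> fst p" if "p \<in> newton_polygon v h" for p
    using newton_polygon_x_range(2)[OF poly that] unfolding m_def S_def .
  have "\<exists>i\<in>S. m < i"
    using support_right_of_min[OF poly q] unfolding S_def m_def by blast
  then obtain D lam where D: "D \<in> S" "m < D" "w D = w m + lam * (real D - real m)"
    and line: "\<forall>i\<in>S. w m + lam * (real i - real m) \<le> w i"
    "\<forall>i\<in>S. D < i \<longrightarrow> w m + lam * (real i - real m) < w i"
    using minimal_slope_line[OF S(1) m, of w] by blast
  define \<beta> where "\<beta> = w m - lam * real m"
  have above: "\<And>i. h i \<noteq> 0 \<Longrightarrow> lam * real i + \<beta> \<le> w i"
    and strict: "\<And>i. h i \<noteq> 0 \<Longrightarrow> D < i \<Longrightarrow> lam * real i + \<beta> < w i"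
    and on_line: "w m = lam * real m + \<beta>" "w D = lam * real D + \<beta>"
    using line D unfolding \<beta>_def S_def by (auto simp: algebra_simps)
  have hm: "h m \<noteq> 0" and hD: "h D \<noteq> 0"
    using m(1) D(1) unfolding S_def by auto
  have "closed_segment (real m, lam * real m + \<beta>) (real D, lam * real D + \<beta>) \<subseteq> newton_polygon v h"
    using closed_segment_subset_newton_polygon[OF above[unfolded w_def] hm hD on_line[unfolded w_def]] .
  then have "(real m, lam * real m + \<beta>) \<in> newton_polygon v h"
    by auto
  then have "np_left_end v h = (real m, lam * real m + \<beta>)"
    using left by (intro np_left_end_eqI) auto
  moreover have "(real D, lam * real D + \<beta>) extreme_point_of newton_polygon v h"
    using extreme_point_at_end_of_edge[OF poly above[unfolded w_def] strict[unfolded w_def] hD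
        on_line(2)[unfolded w_def]] .
  moreover have "h i = 0" if "i < m" for i
    using m(2)[of i] that unfolding S_def by force
  ultimately show ?thesis
    using that[OF D(2) hm hD _ above strict on_line] left by blast
qed

lemma first_break_point:
  fixes h :: "nat \<Rightarrow> 'a::zero" and v :: "'a \<Rightarrow> ereal"
  assumes poly: "is_poly h" and P: "(real d, e) \<in> np_break_points v h"
    and first: "\<forall>q\<in>np_break_points v h. real d \<le> fst q"
  defines "w \<equiv> \<lambda>i. real_of_ereal (v (h i))"
  obtains m \<alpha> \<beta> where "m < d" "h m \<noteq> 0" "h d \<noteq> 0" "\<And>i. i < m \<Longrightarrow> h i = 0"
    "\<And>i. h i \<noteq> 0 \<Longrightarrow> \<alpha> * real i + \<beta> \<le> w i" "\<And>i. h i \<noteq> 0 \<Longrightarrow> d < i \<Longrightarrow> \<alpha> * real i + \<beta> < w i"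
    "w m = \<alpha> * real m + \<beta>" "w d = \<alpha> * real d + \<beta>" "e = \<alpha> * real d + \<beta>"
    "np_left_end v h = (real m, \<alpha> * real m + \<beta>)"
proof -
  let ?NP = "newton_polygon v h"
  have P_ext: "(real d, e) extreme_point_of ?NP"
    using P unfolding np_break_points_def np_vertices_def by blast
  then have P_in: "(real d, e) \<in> ?NP"
    unfolding extreme_point_of_def by blast
  obtain q r where qr: "q \<in> ?NP" "fst q < real d" "r \<in> ?NP" "real d < fst r"
    using P unfolding np_break_points_def by auto
  obtain m D \<alpha> \<beta> where mD: "m < D" "h m \<noteq> 0" "h D \<noteq> 0" "\<And>i. i < m \<Longrightarrow> h i = 0"
    and above: "\<And>i. h i \<noteq> 0 \<Longrightarrow> \<alpha> * real i + \<beta> \<le> w i"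
    and strict: "\<And>i. h i \<noteq> 0 \<Longrightarrow> D < i \<Longrightarrow> \<alpha> * real i + \<beta> < w i"
    and on_line: "w m = \<alpha> * real m + \<beta>" "w D = \<alpha> * real D + \<beta>"
    and D_ext: "(real D, \<alpha> * real D + \<beta>) extreme_point_of ?NP"
    and left: "\<And>p. p \<in> ?NP \<Longrightarrow> real m \<le> fst p"
    and left_end: "np_left_end v h = (real m, \<alpha> * real m + \<beta>)"
    using first_edge_of_newton_polygon[OF poly qr(1) _ qr(2)[THEN less_trans, OF qr(4)]] qr(3)
    unfolding w_def by blast
  have seg: "closed_segment (real m, \<alpha> * real m + \<beta>) (real D, \<alpha> * real D + \<beta>) \<subseteq> ?NP"
    using closed_segment_subset_newton_polygon[OF above[unfolded w_def] mD(2,3) on_line[unfolded w_def]] .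
  have "real m < real d"
    using left[OF qr(1)] qr(2) by linarith
  have "D = d"
  proof (rule ccontr)
    assume "D \<noteq> d"
    then consider "d < D" | "D < d"
      by linarith
    then show False
    proof cases
      case 1
      have "(real d, \<alpha> * real d + \<beta>) \<in> ?NP"
        using seg line_point_in_closed_segment[of "real m" "real D" "real d" \<alpha> \<beta>] 1 \<open>real m < real d\<close>
        by auto
      then have "(real d, e) = (real d, \<alpha> * real d + \<beta>)"
        using P_in by (intro newton_polygon_eqI) auto
      moreover have "(real d, \<alpha> * real d + \<beta>) \<in> open_segment (real m, \<alpha> * real m + \<beta>) (real D, \<alpha> * real D + \<beta>)"
        using 1 \<open>real m < real d\<close> by (intro line_point_in_open_segment) auto
      ultimately show False
        using P_ext seg unfolding extreme_point_of_def by auto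
    next
      case 2
      have "(real m, \<alpha> * real m + \<beta>) \<in> ?NP"
        using seg by auto
      then have "(real D, \<alpha> * real D + \<beta>) \<in> np_break_points v h"
        unfolding np_break_points_def np_vertices_def using D_ext mD(1) qr(3,4) 2 by force
      then show False
        using first 2 by auto
    qed
  qed
  moreover have "(real d, e) = (real D, \<alpha> * real D + \<beta>)"
    using P_in D_ext \<open>D = d\<close> unfolding extreme_point_of_def by (intro newton_polygon_eqI) auto
  ultimately show ?thesis
    using that[OF _ mD(2) _ mD(4) above] mD(1,3) strict on_line left_end by auto
qed

section \<open>Factorization along the first edge\<close>

context complete_valued_division_ring
begin

lemma first_edge_left_factor:
  assumes poly: "is_poly h" and P: "(real d, e) \<in> np_break_points v h"
    and first: "\<forall>q\<in>np_break_points v h. real d \<le> fst q"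
  shows "\<exists>f g. is_poly f \<and> is_poly g \<and> pdeg f = d
    \<and> newton_polygon v f = closed_segment (np_left_end v h) (real d, e) \<and> h = pmul f g"
proof -
  obtain m \<alpha> \<beta> where "m < d" "h m \<noteq> 0" "h d \<noteq> 0" "\<And>i. i < m \<Longrightarrow> h i = 0"
    and above: "\<And>i. h i \<noteq> 0 \<Longrightarrow> \<alpha> * real i + \<beta> \<le> real_of_ereal (v (h i))"
    and strict: "\<And>i. h i \<noteq> 0 \<Longrightarrow> d < i \<Longrightarrow> \<alpha> * real i + \<beta> < real_of_ereal (v (h i))"
    and on_line: "real_of_ereal (v (h m)) = \<alpha> * real m + \<beta>" "real_of_ereal (v (h d)) = \<alpha> * real d + \<beta>"
    and "e = \<alpha> * real d + \<beta>" "np_left_end v h = (real m, \<alpha> * real m + \<beta>)"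
    using first_break_point[OF poly P first] by blast
  have "above_line \<alpha> \<beta> h"
    unfolding above_line_def
  proof
    fix i
    show "ereal (\<beta> + \<alpha> * real i) \<le> v (h i)"
      using above[of i] by (cases "h i = 0") (simp_all add: ereal_le_v_iff algebra_simps)
  qed
  moreover have "v (h m) = ereal (\<beta> + \<alpha> * real m)" "v (h d) = ereal (\<beta> + \<alpha> * real d)"
    by (subst v_finite; use on_line \<open>h m \<noteq> 0\<close> \<open>h d \<noteq> 0\<close> in simp)+
  moreover have "ereal (\<beta> + \<alpha> * real i) < v (h i)" if "d < i" "h i \<noteq> 0" for i
    by (subst v_finite[OF that(2)]) (use strict[OF that(2,1)] in simp)
  ultimately have "\<exists>f g. deg_le d f \<and> (\<forall>i<m. f i = 0) \<and> f d = h d \<and> v (f m) = v (h m)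
      \<and> above_line \<alpha> \<beta> f \<and> is_poly g \<and> h = pmul f g"
    by (intro first_edge_factor[OF \<open>m < d\<close> poly \<open>\<And>i. i < m \<Longrightarrow> h i = 0\<close>])
  then obtain f g where f: "deg_le d f" "\<forall>i<m. f i = 0" "f d = h d" "v (f m) = v (h m)"
    "above_line \<alpha> \<beta> f" and g: "is_poly g" "h = pmul f g"
    by blast
  have "f m \<noteq> 0" "f d \<noteq> 0"
    using f(3,4) \<open>h m \<noteq> 0\<close> \<open>h d \<noteq> 0\<close> by (metis v_eq_infinity_iff)+
  have "newton_polygon v f = closed_segment (real m, \<alpha> * real m + \<beta>) (real d, \<alpha> * real d + \<beta>)"
  proof (rule newton_polygon_eq_segment[OF \<open>m < d\<close> \<open>f m \<noteq> 0\<close> \<open>f d \<noteq> 0\<close>])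
    show "m \<le> i \<and> i \<le> d" if "f i \<noteq> 0" for i
      using f(1,2) that deg_le_imp_le not_less by blast
    show "\<alpha> * real i + \<beta> \<le> real_of_ereal (v (f i))" if "f i \<noteq> 0" for i
      using above_lineD[OF f(5), of i] that by (simp add: ereal_le_v_iff algebra_simps)
    show "real_of_ereal (v (f m)) = \<alpha> * real m + \<beta>" "real_of_ereal (v (f d)) = \<alpha> * real d + \<beta>"
      using f(3,4) on_line by simp_all
  qed
  moreover have "pdeg f = d" "is_poly f"
    using pdeg_eqI[OF f(1) \<open>f d \<noteq> 0\<close>] f(1) is_poly_iff_deg_le by auto
  ultimately show ?thesis
    using g \<open>e = \<alpha> * real d + \<beta>\<close> \<open>np_left_end v h = (real m, \<alpha> * real m + \<beta>)\<close> by auto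
qed

end

section \<open>The opposite skew field\<close>

datatype 'a opposite = Op (un_op: 'a)

lemma opposite_eq_iff: "x = y \<longleftrightarrow> un_op x = un_op y"
  by (cases x; cases y) simp

instantiation opposite :: (division_ring) "{ring_1, inverse}"
begin

definition "0 = Op 0"
definition "1 = Op 1"
definition "x + y = Op (un_op x + un_op y)"
definition "x - y = Op (un_op x - un_op y)"
definition "- x = Op (- un_op x)"
definition "x * y = Op (un_op y * un_op x)"
definition "inverse x = Op (inverse (un_op x))"
definition "x div y = Op (inverse (un_op y) * un_op x)"

instance
  by standard (auto simp: opposite_eq_iff zero_opposite_def one_opposite_def plus_opposite_def
      minus_opposite_def uminus_opposite_def times_opposite_def algebra_simps)

end

instance opposite :: (division_ring) division_ring
  by standard (auto simp: opposite_eq_iff zero_opposite_def one_opposite_def times_opposite_def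
      inverse_opposite_def divide_opposite_def)

lemma Op_eq_zero_iff [simp]: "Op x = 0 \<longleftrightarrow> x = 0"
  by (simp add: zero_opposite_def)

lemma un_op_zero [simp]: "un_op 0 = 0"
  by (simp add: zero_opposite_def)

lemma un_op_eq_zero_iff [simp]: "un_op x = 0 \<longleftrightarrow> x = 0"
  by (simp add: opposite_eq_iff)

lemma un_op_add [simp]: "un_op (x + y) = un_op x + un_op y"
  by (simp add: plus_opposite_def)

lemma un_op_diff [simp]: "un_op (x - y) = un_op x - un_op y"
  by (simp add: minus_opposite_def)

lemma un_op_mult [simp]: "un_op (x * y) = un_op y * un_op x"
  by (simp add: times_opposite_def)

lemma un_op_sum: "un_op (sum f A) = (\<Sum>a\<in>A. un_op (f a))"
  by (induction A rule: infinite_finite_induct) simp_all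

lemma pmul_Op: "pmul (\<lambda>i. Op (f i)) (\<lambda>i. Op (g i)) n = Op (pmul g f n)"
proof -
  have "un_op (pmul (\<lambda>i. Op (f i)) (\<lambda>i. Op (g i)) n) = (\<Sum>i\<le>n. g (n - i) * f i)"
    unfolding pmul_def un_op_sum by simp
  also have "\<dots> = pmul g f n"
    unfolding pmul_def atMost_atLeast0 by (subst sum.atLeastAtMost_rev) (simp add: diff_diff_cancel)
  finally show ?thesis
    by (simp add: opposite_eq_iff)
qed

lemma discrete_valuation_opposite:
  "discrete_valuation v \<Longrightarrow> discrete_valuation (\<lambda>x. v (un_op x))"
  unfolding discrete_valuation_def by (simp add: add.commute)

lemma complete_valuation_opposite:
  assumes "complete_valuation v"
  shows "complete_valuation (\<lambda>x. v (un_op x))"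
  unfolding complete_valuation_def
proof (intro allI impI)
  fix x :: "nat \<Rightarrow> 'a opposite"
  assume "(\<lambda>i. v (un_op (x i))) \<longlonglongrightarrow> \<infinity>"
  then obtain s where "(\<lambda>n. v (s - (\<Sum>i<n. un_op (x i)))) \<longlonglongrightarrow> \<infinity>"
    using assms unfolding complete_valuation_def by (elim allE[of _ "\<lambda>i. un_op (x i)"] impE) auto
  then show "\<exists>s. (\<lambda>n. v (un_op (s - sum x {..<n}))) \<longlonglongrightarrow> \<infinity>"
    by (intro exI[of _ "Op s"]) (simp add: un_op_sum)
qed

lemma newton_polygon_Op:
  "newton_polygon (\<lambda>x. v (un_op x)) (\<lambda>i. Op (p i)) = newton_polygon v p"
proof -
  have "np_points (\<lambda>x. v (un_op x)) (\<lambda>i. Op (p i)) = np_points v p"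
    unfolding np_points_def by simp
  then show ?thesis
    unfolding newton_polygon_def np_region_def by simp
qed

context complete_valued_division_ring
begin

lemma first_edge_right_factor:
  assumes "is_poly h" "(real d, e) \<in> np_break_points v h" "\<forall>q\<in>np_break_points v h. real d \<le> fst q"
  shows "\<exists>f g. is_poly f \<and> is_poly g \<and> pdeg f = d
    \<and> newton_polygon v f = closed_segment (np_left_end v h) (real d, e) \<and> h = pmul g f"
proof -
  interpret opposite: complete_valued_division_ring "\<lambda>x::'a opposite. v (un_op x)"
    using discrete_valuation_opposite[OF discrete] complete_valuation_opposite[OF complete]
    by unfold_locales
  have "is_poly (\<lambda>i. Op (h i))"
    using assms(1) by (simp add: is_poly_def)
  then obtain F G where F: "is_poly F" "pdeg F = d"
    "newton_polygon (\<lambda>x. v (un_op x)) F = closed_segment (np_left_end v h) (real d, e)"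
    and G: "is_poly G" "(\<lambda>i. Op (h i)) = pmul F G"
    using opposite.first_edge_left_factor[of "\<lambda>i. Op (h i)" d e] assms(2,3)
    unfolding np_break_points_def np_vertices_def np_left_end_def newton_polygon_Op by blast
  define f where "f i = un_op (F i)" for i
  define g where "g i = un_op (G i)" for i
  have FG: "F = (\<lambda>i. Op (f i))" "G = (\<lambda>i. Op (g i))"
    unfolding f_def g_def by (simp_all add: fun_eq_iff opposite_eq_iff)
  then have "(\<lambda>i. Op (h i)) = (\<lambda>n. Op (pmul g f n))"
    using G(2) unfolding FG pmul_Op[abs_def] by simp
  then have "h = pmul g f"
    by (simp add: fun_eq_iff)
  have supp: "{i. f i \<noteq> 0} = {i. F i \<noteq> 0}" "{i. g i \<noteq> 0} = {i. G i \<noteq> 0}"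
    unfolding f_def g_def by simp_all
  have "is_poly f" "is_poly g"
    using F(1) G(1) unfolding is_poly_def supp .
  moreover have "pdeg f = d"
    using F(2) unfolding pdeg_def supp .
  moreover have "newton_polygon v f = closed_segment (np_left_end v h) (real d, e)"
    using F(3) unfolding FG(1) newton_polygon_Op .
  ultimately show ?thesis
    using \<open>h = pmul g f\<close> by blast
qed

end

theorem proposition2p7:
  fixes v :: "'a::division_ring \<Rightarrow> ereal"
    and h :: "nat \<Rightarrow> 'a" and d :: nat and e :: real
  assumes "discrete_valuation v" and "complete_valuation v"
    and "is_poly h"
    and "np_num_edges v h \<ge> 2"
    and "(real d, e) \<in> np_break_points v h"
    and "\<forall>q \<in> np_break_points v h. real d \<le> fst q"
  shows "(\<exists>f g. is_poly f \<and> is_poly g \<and> pdeg f = d \<and>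
            newton_polygon v f = closed_segment (np_left_end v h) (real d, e) \<and>
            h = pmul f g)
       \<and> (\<exists>f g. is_poly f \<and> is_poly g \<and> pdeg f = d \<and>
            newton_polygon v f = closed_segment (np_left_end v h) (real d, e) \<and>
            h = pmul g f)"
proof -
  interpret complete_valued_division_ring v
    using assms(1,2) by unfold_locales
  show ?thesis
    using first_edge_left_factor[OF assms(3,5,6)] first_edge_right_factor[OF assms(3,5,6)] by blast
qed

end
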